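(* Let $L\in K[D]$ with $\operatorname{Sym}_L=S_1\cdots S_k$ (homogeneous $S_i$), and let $b_1,\dots,b_k\in K$ with $b_1\cdots b_k=1$, so that also $\operatorname{Sym}_L=(b_1S_1)\cdots(b_kS_k)$. Then the rings of obstacles for the two types coincide: $$K[X]/(\operatorname{Sym}_L/S_1,\dots,\operatorname{Sym}_L/S_k)=K[X]/(\operatorname{Sym}_L/(b_1S_1),\dots,\operatorname{Sym}_L/(b_kS_k)).$$ Moreover, the obstacles coincide: the set of classes in this ring of the symbols of common obstacles to factorization of $L$ of type $(S_1)\cdots(S_k)$ equals the set of classes of the symbols of common obstacles to factorization of $L$ of type $(b_1S_1)\cdots(b_kS_k)$.
   Context: $K$ is a field with commuting derivations $\partial_1,\dots,\partial_n$, and $K[D]=K[D_1,\dots,D_n]$ is the ring of linear differential operators over $K$: the $D_i$ commute with each other and $D_i\circ a=aD_i+\partial_i(a)$ for $a\in K$. Every $L\in K[D]$ is uniquely $\sum_{|J|\le d}a_JD^J$ with $a_J\in K$ and $D^J=D_1^{j_1}\cdots D_n^{j_n}$. The order $\operatorname{ord}(L)$ is the largest $|J|$ with $a_J\ne0$, and $\operatorname{ord}(0)=-\infty$. The symbol $\operatorname{Sym}_L=\sum_{|J|=\operatorname{ord}L}a_JX^J\in K[X]=K[X_1,\dots,X_n]$, with $\operatorname{Sym}_0=0$. A factorization of type $(T_1)\cdots(T_k)$ of an operator $M$ is $M=F_1\circ\cdots\circ F_k$ with $\operatorname{Sym}_{F_i}=T_i$. A common obstacle to factorization of $L$ of type $(T_1)\cdots(T_k)$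 is an operator $R$ such that $L-R$ has a factorization of that type and $R$ has minimal possible order among such operators. The ring of obstacles for type $(T_1)\cdots(T_k)$, where $\operatorname{Sym}_L=T_1\cdots T_k$, is $K[X]/(\operatorname{Sym}_L/T_1,\dots,\operatorname{Sym}_L/T_k)$. The obstacle is the class in this ring of the symbols of common obstacles (these all lie in one class when the $T_i$ are pairwise coprime). *)

theory Defs
  imports Main "HOL-Library.Poly_Mapping"
begin

text \<open>
  K is a field type 'a with n commuting derivations \<partial> 0, ..., \<partial> (n-1)
  (the paper's \<partial>_1..\<partial>_n).  Both K[X] = K[X_1..X_n] and
  K[D] = K[D_1..D_n] are represented by finitely supported coefficient maps
  maps from multi-indices to 'a whose monomials only involve the first n variables.
  On K[X] we use the library multiplication (commutative polynomial product);
  on K[D] the composition is op_comp below (Leibniz rule).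
\<close>

type_synonym mindex = "nat \<Rightarrow>\<^sub>0 nat"
type_synonym 'a mpoly = "mindex \<Rightarrow>\<^sub>0 'a"

definition derivations :: "nat \<Rightarrow> (nat \<Rightarrow> 'a::field \<Rightarrow> 'a) \<Rightarrow> bool" where
  "derivations n d \<longleftrightarrow>
     (\<forall>i<n. \<forall>a b. d i (a + b) = d i a + d i b) \<and>
     (\<forall>i<n. \<forall>a b. d i (a * b) = a * d i b + d i a * b) \<and>
     (\<forall>i<n. \<forall>j<n. \<forall>a. d i (d j a) = d j (d i a))"

definition in_vars :: "nat \<Rightarrow> 'a::zero mpoly \<Rightarrow> bool" where
  "in_vars n p \<longleftrightarrow> (\<forall>J\<in>Poly_Mapping.keys p. Poly_Mapping.keys J \<subseteq> {..<n})"

definition mdeg :: "mindex \<Rightarrow> nat" where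
  "mdeg J = (\<Sum>i\<in>Poly_Mapping.keys J. Poly_Mapping.lookup J i)"

definition mle :: "mindex \<Rightarrow> mindex \<Rightarrow> bool" where
  "mle I J \<longleftrightarrow> (\<forall>i. Poly_Mapping.lookup I i \<le> Poly_Mapping.lookup J i)"

definition mbinom :: "mindex \<Rightarrow> mindex \<Rightarrow> nat" where
  "mbinom J I = (\<Prod>i\<in>Poly_Mapping.keys J. Poly_Mapping.lookup J i choose Poly_Mapping.lookup I i)"

definition dpow :: "nat \<Rightarrow> (nat \<Rightarrow> 'a \<Rightarrow> 'a) \<Rightarrow> mindex \<Rightarrow> 'a \<Rightarrow> 'a" where
  "dpow n d J b = foldr (\<lambda>i x. (d i ^^ Poly_Mapping.lookup J i) x) [0..<n] b"

text \<open>Composition in K[D]: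
  (\<Sum> a_J D^J) \<circ> (\<Sum> b_M D^M) = \<Sum>_{J,M} \<Sum>_{I \<le> J} a_J binom(J,I) \<partial>^{J-I}(b_M) D^{I+M},
  i.e. the multiplication determined by D_i D_j = D_j D_i and
  D_i \<circ> a = a D_i + \<partial>_i(a).\<close>
definition op_comp :: "nat \<Rightarrow> (nat \<Rightarrow> 'a::field \<Rightarrow> 'a) \<Rightarrow> 'a mpoly \<Rightarrow> 'a mpoly \<Rightarrow> 'a mpoly" where
  "op_comp n d A B =
     (\<Sum>J\<in>Poly_Mapping.keys A. \<Sum>M\<in>Poly_Mapping.keys B. \<Sum>I\<in>{I. mle I J}.
        Poly_Mapping.single (I + M)
          (Poly_Mapping.lookup A J * of_nat (mbinom J I) * dpow n d (J - I) (Poly_Mapping.lookup B M)))"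

definition op_comp_list :: "nat \<Rightarrow> (nat \<Rightarrow> 'a::field \<Rightarrow> 'a) \<Rightarrow> 'a mpoly list \<Rightarrow> 'a mpoly" where
  "op_comp_list n d Fs = foldr (op_comp n d) Fs 1"

text \<open>Order of an operator.  ord 0 = -\<infinity> is encoded as -1 (only comparisons
  between orders are used, and -1 is below every genuine order).\<close>
definition ord :: "'a::zero mpoly \<Rightarrow> int" where
  "ord L = (if L = 0 then -1 else int (Max (mdeg ` Poly_Mapping.keys L)))"

text \<open>Symbol: the top-order homogeneous part, read as an element of K[X].\<close>
definition Sym :: "'a::comm_monoid_add mpoly \<Rightarrow> 'a mpoly" where
  "Sym L = (\<Sum>J\<in>{J\<in>Poly_Mapping.keys L. int (mdeg J) = ord L}. Poly_Mapping.single J (Poly_Mapping.lookup L J))"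

definition homogeneous :: "'a::zero mpoly \<Rightarrow> bool" where
  "homogeneous p \<longleftrightarrow> (\<forall>I\<in>Poly_Mapping.keys p. \<forall>J\<in>Poly_Mapping.keys p. mdeg I = mdeg J)"

definition scal :: "'a::field \<Rightarrow> 'a mpoly \<Rightarrow> 'a mpoly" where
  "scal c T = Poly_Mapping.single 0 c * T"

definition poly_ideal :: "nat \<Rightarrow> 'a::field mpoly list \<Rightarrow> 'a mpoly set" where
  "poly_ideal n Gs = {(\<Sum>i<length Gs. C i * Gs ! i) | C. \<forall>i<length Gs. in_vars n (C i)}"

text \<open>Sym_L / T_i for Sym_L = T_1 ... T_k, i.e. the product of the other factors.\<close>
definition cofactors :: "'a::field mpoly list \<Rightarrow> 'a mpoly list" where
  "cofactors Ts = map (\<lambda>i. \<Prod>j\<in>{..<length Ts} - {i}. Ts ! j) [0..<length Ts]"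

text \<open>Ring of obstacles K[X]/(Sym_L/T_1, ..., Sym_L/T_k), given by its ideal.\<close>
definition obstacle_ideal :: "nat \<Rightarrow> 'a::field mpoly list \<Rightarrow> 'a mpoly set" where
  "obstacle_ideal n Ts = poly_ideal n (cofactors Ts)"

definition cls :: "'a::field mpoly set \<Rightarrow> 'a mpoly \<Rightarrow> 'a mpoly set" where
  "cls I p = {p + q | q. q \<in> I}"

definition has_factorization ::
  "nat \<Rightarrow> (nat \<Rightarrow> 'a::field \<Rightarrow> 'a) \<Rightarrow> 'a mpoly \<Rightarrow> 'a mpoly list \<Rightarrow> bool" where
  "has_factorization n d M Ts \<longleftrightarrow>
     (\<exists>Fs. length Fs = length Ts \<and>
        (\<forall>i<length Ts. in_vars n (Fs ! i) \<and> Sym (Fs ! i) = Ts ! i) \<and>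
        M = op_comp_list n d Fs)"

definition common_obstacle ::
  "nat \<Rightarrow> (nat \<Rightarrow> 'a::field \<Rightarrow> 'a) \<Rightarrow> 'a mpoly \<Rightarrow> 'a mpoly list \<Rightarrow> 'a mpoly \<Rightarrow> bool" where
  "common_obstacle n d L Ts R \<longleftrightarrow>
     in_vars n R \<and> has_factorization n d (L - R) Ts \<and>
     (\<forall>R'. in_vars n R' \<and> has_factorization n d (L - R') Ts \<longrightarrow> ord R \<le> ord R')"

definition obstacle_classes ::
  "nat \<Rightarrow> (nat \<Rightarrow> 'a::field \<Rightarrow> 'a) \<Rightarrow> 'a mpoly \<Rightarrow> 'a mpoly list \<Rightarrow> 'a mpoly set set" where
  "obstacle_classes n d L Ts =
     (\<lambda>R. cls (obstacle_ideal n Ts) (Sym R)) ` {R. common_obstacle n d L Ts R}"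

end

theory Submission
  imports Defs "HOL.Modules" "HOL-Library.FuncSet"
begin

text \<open>
  Let \<open>F\<^sub>1 \<circ> \<dots> \<circ> F\<^sub>k\<close> be a factorization of type \<open>(S\<^sub>1)\<cdots>(S\<^sub>k)\<close> and put
  \<open>c\<^sub>i = b\<^sub>1\<cdots>b\<^sub>i\<close>. The operators \<open>G\<^sub>i = c\<^sub>i\<^sub>-\<^sub>1\<inverse> (F\<^sub>i \<circ> c\<^sub>i)\<close> have symbols \<open>b\<^sub>i S\<^sub>i\<close>, and
  \<open>G\<^sub>1 \<circ> \<dots> \<circ> G\<^sub>k = F\<^sub>1 \<circ> \<dots> \<circ> F\<^sub>k\<close> because every constant passes through the
  following factor: \<open>(F \<circ> c) \<circ> Z = F \<circ> (c Z)\<close>, which is the Leibniz rule for the iterated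
  derivations \<open>\<partial>\<^sup>J\<close>. Since \<open>c\<^sub>k = 1\<close> and the \<open>b\<^sub>i\<close> can be inverted, the two types admit exactly
  the same factorizable operators \<open>L - R\<close>, hence the same common obstacles. Finally
  \<open>Sym\<^sub>L/(b\<^sub>i S\<^sub>i)\<close> is a nonzero constant multiple of \<open>Sym\<^sub>L/S\<^sub>i\<close>, so the two ideals, and with
  them the residue classes, coincide.
\<close>

abbreviation lookup :: "('b \<Rightarrow>\<^sub>0 'c::zero) \<Rightarrow> 'b \<Rightarrow> 'c" where
  "lookup \<equiv> Poly_Mapping.lookup"

abbreviation keys :: "('b \<Rightarrow>\<^sub>0 'c::zero) \<Rightarrow> 'b set" where
  "keys \<equiv> Poly_Mapping.keys"

abbreviation single :: "'b \<Rightarrow> 'c::zero \<Rightarrow> 'b \<Rightarrow>\<^sub>0 'c" where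
  "single \<equiv> Poly_Mapping.single"

lemma lookup_scal [simp]: "lookup (scal c T) J = c * lookup T J"
  unfolding scal_def mult_map_scale_conv_mult[symmetric] by (simp add: map.rep_eq when_def)

lemma scal_scal [simp]: "scal a (scal b T) = scal (a * b) T"
  by (rule poly_mapping_eqI) simp

lemma scal_one [simp]: "scal 1 T = T"
  by (rule poly_mapping_eqI) simp

lemma scal_zero [simp]: "scal c 0 = 0"
  by (simp add: scal_def)

lemma keys_scal: "(c::'a::field) \<noteq> 0 \<Longrightarrow> keys (scal c T) = keys T"
  by (auto simp: in_keys_iff)

lemma keys_scal_subset: "keys (scal (c::'a::field) T) \<subseteq> keys T"
  by (auto simp: in_keys_iff)

lemma in_vars_scal: "in_vars n T \<Longrightarrow> in_vars n (scal (c::'a::field) T)"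
  using keys_scal_subset unfolding in_vars_def by blast

lemma scal_single: "scal c (single J a) = single J (c * a)"
  by (simp add: scal_def mult_single)

lemma scal_sum: "scal c (sum f A) = (\<Sum>x\<in>A. scal c (f x))"
  unfolding scal_def by (simp add: sum_distrib_left)

lemma scal_mult_scal: "scal a X * scal b Y = scal (a * b) (X * Y)"
  unfolding scal_def by (simp add: algebra_simps mult_single)

lemma prod_scal: "(\<Prod>j\<in>A. scal (b j) (S j)) = scal (\<Prod>j\<in>A. b j) (\<Prod>j\<in>A. S j)"
proof (induction A rule: infinite_finite_induct)
  case (insert x F)
  then show ?case by (simp add: scal_mult_scal)
qed (simp_all add: scal_def)

lemma mult_scal_commute: "C * scal c G = scal c C * G"
  unfolding scal_def by (simp add: algebra_simps)

section \<open>The ring of obstacles\<close>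

lemma poly_ideal_scal_generators_subset:
  assumes len: "length Hs = length Gs"
    and Hs: "\<And>i. i < length Gs \<Longrightarrow> Hs ! i = scal (e i) (Gs ! i)"
  shows "poly_ideal n Hs \<subseteq> poly_ideal n Gs"
proof
  fix x assume "x \<in> poly_ideal n Hs"
  then obtain C where x: "x = (\<Sum>i<length Hs. C i * Hs ! i)" and C: "\<forall>i<length Hs. in_vars n (C i)"
    unfolding poly_ideal_def by blast
  have "x = (\<Sum>i<length Gs. scal (e i) (C i) * Gs ! i)"
    unfolding x len by (rule sum.cong) (simp_all add: Hs mult_scal_commute)
  moreover have "\<forall>i<length Gs. in_vars n (scal (e i) (C i))"
    using C len in_vars_scal by auto
  ultimately show "x \<in> poly_ideal n Gs"
    unfolding poly_ideal_def mem_Collect_eq by (intro exI[of _ "\<lambda>i. scal (e i) (C i)"]) auto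
qed

lemma poly_ideal_scal_generators:
  assumes len: "length Hs = length Gs"
    and Hs: "\<And>i. i < length Gs \<Longrightarrow> Hs ! i = scal (e i) (Gs ! i)"
    and e: "\<And>i. i < length Gs \<Longrightarrow> e i \<noteq> 0"
  shows "poly_ideal n Hs = poly_ideal n Gs"
proof
  show "poly_ideal n Hs \<subseteq> poly_ideal n Gs"
    using len Hs by (rule poly_ideal_scal_generators_subset)
  have "Gs ! i = scal (inverse (e i)) (Hs ! i)" if "i < length Hs" for i
    using that len Hs e by simp
  then show "poly_ideal n Gs \<subseteq> poly_ideal n Hs"
    using len by (intro poly_ideal_scal_generators_subset) auto
qed

lemma cofactors_map2_scal:
  assumes "length b = length S" and "i < length S"
  shows "cofactors (map2 scal b S) ! i = scal (\<Prod>j\<in>{..<length S} - {i}. b ! j) (cofactors S ! i)"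
proof -
  have "cofactors (map2 scal b S) ! i = (\<Prod>j\<in>{..<length S} - {i}. scal (b ! j) (S ! j))"
    using assms by (simp add: cofactors_def)
  then show ?thesis
    using assms(2) by (simp add: prod_scal cofactors_def)
qed

lemma obstacle_ideal_map2_scal:
  assumes len: "length b = length S" and b: "0 \<notin> set b"
  shows "obstacle_ideal n (map2 scal b S) = obstacle_ideal n S"
  unfolding obstacle_ideal_def
proof (rule poly_ideal_scal_generators)
  show "length (cofactors (map2 scal b S)) = length (cofactors S)"
    using len by (simp add: cofactors_def)
  fix i assume "i < length (cofactors S)"
  then have i: "i < length S" by (simp add: cofactors_def)
  show "cofactors (map2 scal b S) ! i = scal (\<Prod>j\<in>{..<length S} - {i}. b ! j) (cofactors S ! i)"
    by (rule cofactors_map2_scal[OF len i])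
  show "(\<Prod>j\<in>{..<length S} - {i}. b ! j) \<noteq> 0"
    using b len by (auto simp: prod_zero_iff) (metis nth_mem)
qed

section \<open>Leibniz rule for iterated derivations\<close>

lemma additive_funpow: "additive (f :: 'a::ab_group_add \<Rightarrow> 'a) \<Longrightarrow> additive (f ^^ m)"
  by (induction m) (auto simp: additive_def)

lemma additive_of_nat_mult:
  fixes f :: "'a::ring_1 \<Rightarrow> 'b::ring_1"
  shows "additive f \<Longrightarrow> f (of_nat k * a) = of_nat k * f a"
  by (induction k) (simp_all add: additive.zero additive.add distrib_right)

lemma derivations_additive: "derivations n d \<Longrightarrow> i < n \<Longrightarrow> additive (d i)"
  unfolding derivations_def additive_def by blast

lemma derivations_mult: "derivations n d \<Longrightarrow> i < n \<Longrightarrow> d i (a * b) = a * d i b + d i a * b"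
  unfolding derivations_def by blast

lemma derivation_funpow_mult:
  assumes der: "derivations n d" and i: "i < n"
  shows "(d i ^^ m) (u * v) = (\<Sum>a\<le>m. of_nat (m choose a) * (d i ^^ (m - a)) u * (d i ^^ a) v)"
proof (induction m)
  case 0 then show ?case by simp
next
  case (Suc m)
  define U where "U k = (d i ^^ k) u" for k
  define V where "V k = (d i ^^ k) v" for k
  have add: "additive (d i)" using der i by (rule derivations_additive)
  have "(d i ^^ Suc m) (u * v) = (\<Sum>a\<le>m. of_nat (m choose a) * d i (U (m - a) * V a))"
    using Suc by (simp add: U_def V_def additive.sum[OF add] mult.assoc additive_of_nat_mult[OF add])
  also have "\<dots> = (\<Sum>a\<le>m. of_nat (m choose a) * U (Suc (m - a)) * V a)
      + (\<Sum>a\<le>m. of_nat (m choose a) * U (m - a) * V (Suc a))"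
    by (simp add: derivations_mult[OF der i] U_def V_def algebra_simps sum.distrib)
  also have "(\<Sum>a\<le>m. of_nat (m choose a) * U (Suc (m - a)) * V a)
      = U (Suc m) * V 0 + (\<Sum>a\<le>m. of_nat (m choose Suc a) * U (m - a) * V (Suc a))"
  proof -
    have "(\<Sum>a\<le>m. of_nat (m choose a) * U (Suc (m - a)) * V a)
        = (\<Sum>a\<le>Suc m. of_nat (m choose a) * U (Suc m - a) * V a)"
      by (simp add: Suc_diff_le binomial_eq_0)
    also have "\<dots> = U (Suc m) * V 0 + (\<Sum>a\<le>m. of_nat (m choose Suc a) * U (m - a) * V (Suc a))"
      by (subst sum.atMost_Suc_shift) simp
    finally show ?thesis .
  qed
  also have "U (Suc m) * V 0 + (\<Sum>a\<le>m. of_nat (m choose Suc a) * U (m - a) * V (Suc a))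
      + (\<Sum>a\<le>m. of_nat (m choose a) * U (m - a) * V (Suc a))
      = (\<Sum>a\<le>Suc m. of_nat (Suc m choose a) * U (Suc m - a) * V a)"
  proof -
    have "(\<Sum>a\<le>Suc m. of_nat (Suc m choose a) * U (Suc m - a) * V a)
        = U (Suc m) * V 0 + (\<Sum>a\<le>m. of_nat (Suc m choose Suc a) * U (m - a) * V (Suc a))"
      by (subst sum.atMost_Suc_shift) simp
    then show ?thesis by (simp add: sum.distrib algebra_simps)
  qed
  finally show ?case by (simp add: U_def V_def)
qed

text \<open>Allowing an arbitrary list of indices in \<open>dpow\<close> makes its Leibniz rule provable by
  induction on the list.\<close>

definition dpow_list :: "(nat \<Rightarrow> 'a \<Rightarrow> 'a) \<Rightarrow> nat list \<Rightarrow> mindex \<Rightarrow> 'a \<Rightarrow> 'a" where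
  "dpow_list d xs K b = foldr (\<lambda>i x. (d i ^^ lookup K i) x) xs b"

lemma dpow_list_Nil [simp]: "dpow_list d [] K b = b"
  by (simp add: dpow_list_def)

lemma dpow_list_Cons: "dpow_list d (x # xs) K b = (d x ^^ lookup K x) (dpow_list d xs K b)"
  by (simp add: dpow_list_def)

lemma dpow_eq_dpow_list: "dpow n d K = dpow_list d [0..<n] K"
  by (simp add: dpow_def dpow_list_def fun_eq_iff)

lemma dpow_list_cong:
  "(\<And>i. i \<in> set xs \<Longrightarrow> lookup K i = lookup K' i) \<Longrightarrow> dpow_list d xs K b = dpow_list d xs K' b"
  by (induction xs) (simp_all add: dpow_list_Cons)

lemma dpow_list_add_single:
  assumes "x \<notin> set xs" and "lookup A x = 0"
  shows "dpow_list d (x # xs) (A + single x a) b = (d x ^^ a) (dpow_list d xs A b)"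
proof -
  have "dpow_list d xs (A + single x a) b = dpow_list d xs A b"
    using assms(1) by (intro dpow_list_cong) (auto simp: lookup_add lookup_single when_def)
  then show ?thesis
    using assms(2) by (simp add: dpow_list_Cons lookup_add)
qed

lemma additive_dpow_list: "derivations n d \<Longrightarrow> set xs \<subseteq> {..<n} \<Longrightarrow> additive (dpow_list d xs K)"
proof (induction xs)
  case (Cons x xs)
  then have "additive (d x ^^ lookup K x)"
    by (intro additive_funpow derivations_additive) auto
  with Cons show ?case
    by (simp add: additive_def dpow_list_Cons)
qed (simp add: additive_def)

lemma additive_dpow: "derivations n d \<Longrightarrow> additive (dpow n d K)"
  unfolding dpow_eq_dpow_list by (rule additive_dpow_list) auto

lemma dpow_zero_index [simp]: "dpow n d 0 b = b"
  by (induction n) (simp_all add: dpow_def)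

definition box :: "mindex \<Rightarrow> mindex set" where
  "box J = {I. mle I J}"

lemma mem_box: "I \<in> box J \<longleftrightarrow> (\<forall>i. lookup I i \<le> lookup J i)"
  by (simp add: box_def mle_def)

lemma keys_subset_of_mem_box: "I \<in> box J \<Longrightarrow> keys I \<subseteq> keys J"
  by (auto simp: mem_box in_keys_iff) (meson less_le_trans)

lemma lookup_eq_zero_of_mem_box: "I \<in> box J \<Longrightarrow> lookup J i = 0 \<Longrightarrow> lookup I i = 0"
  by (metis mem_box le_zero_eq)

lemma finite_box: "finite (box J)"
proof -
  let ?restrict = "\<lambda>I i. if i \<in> keys J then lookup I i else undefined"
  have "inj_on ?restrict (box J)"
  proof (rule inj_onI)
    fix I I' assume I: "I \<in> box J" and I': "I' \<in> box J" and eq: "?restrict I = ?restrict I'"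
    show "I = I'"
    proof (rule poly_mapping_eqI)
      fix i show "lookup I i = lookup I' i"
        using fun_cong[OF eq, of i] lookup_eq_zero_of_mem_box[OF I] lookup_eq_zero_of_mem_box[OF I']
        by (cases "i \<in> keys J") (auto simp: in_keys_iff)
    qed
  qed
  moreover have "?restrict ` box J \<subseteq> PiE (keys J) (\<lambda>i. {..lookup J i})"
    by (auto simp: mem_box PiE_iff)
  moreover have "finite (PiE (keys J) (\<lambda>i. {..lookup J i}))"
    by (rule finite_PiE) auto
  ultimately show ?thesis
    by (meson finite_imageD finite_subset)
qed

lemma box_zero [simp]: "box 0 = {0}"
  by (auto simp: mem_box intro: poly_mapping_eqI)

lemma self_mem_box [simp]: "J \<in> box J"
  by (simp add: mem_box)

lemma sum_box_add_single:
  assumes K: "K = K' + single x m" and K'x: "lookup K' x = 0"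
  shows "(\<Sum>A\<in>box K. F A) = (\<Sum>A'\<in>box K'. \<Sum>a\<le>m. F (A' + single x a))"
proof -
  have "(\<Sum>A'\<in>box K'. \<Sum>a\<le>m. F (A' + single x a)) = (\<Sum>p\<in>box K' \<times> {..m}. F (fst p + single x (snd p)))"
    by (simp add: sum.cartesian_product finite_box split_beta)
  also have "\<dots> = (\<Sum>A\<in>box K. F A)"
  proof (rule sum.reindex_bij_witness[where i = "\<lambda>A. (A - single x (lookup A x), lookup A x)"
        and j = "\<lambda>p. fst p + single x (snd p)"])
    fix A assume "A \<in> box K"
    then show "(A - single x (lookup A x), lookup A x) \<in> box K' \<times> {..m}"
      using K'x by (auto simp: mem_box K lookup_add lookup_minus lookup_single when_def split: if_splits)
  next
    fix p assume p: "p \<in> box K' \<times> {..m}"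
    then have "lookup (fst p) x = 0"
      using K'x by (auto intro: lookup_eq_zero_of_mem_box)
    then show "(fst p + single x (snd p) - single x (lookup (fst p + single x (snd p)) x),
          lookup (fst p + single x (snd p)) x) = p"
      by (auto simp: lookup_add lookup_minus intro!: poly_mapping_eqI)
    show "fst p + single x (snd p) \<in> box K"
      using p by (auto simp: mem_box K lookup_add lookup_single when_def add_mono)
  qed (auto intro!: poly_mapping_eqI simp: lookup_add lookup_minus lookup_single when_def)
  finally show ?thesis ..
qed

lemma prod_choose_add_single:
  assumes "finite S" and "x \<notin> S" and "lookup K x = 0" and "lookup A x = 0"
  shows "(\<Prod>i\<in>insert x S. lookup (K + single x m) i choose lookup (A + single x a) i)
    = (m choose a) * (\<Prod>i\<in>S. lookup K i choose lookup A i)"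
proof -
  have "(\<Prod>i\<in>S. lookup (K + single x m) i choose lookup (A + single x a) i)
      = (\<Prod>i\<in>S. lookup K i choose lookup A i)"
    using assms(2) by (intro prod.cong) (auto simp: lookup_add lookup_single when_def)
  then show ?thesis
    using assms by (simp add: lookup_add)
qed

lemma diff_add_single:
  fixes K A :: mindex
  assumes "a \<le> m" and "lookup A x = 0"
  shows "(K + single x m) - (A + single x a) = (K - A) + single x (m - a)"
proof (rule poly_mapping_eqI)
  fix k
  show "lookup ((K + single x m) - (A + single x a)) k = lookup ((K - A) + single x (m - a)) k"
    using assms by (cases "k = x") (simp_all add: lookup_add lookup_minus lookup_single Nat.add_diff_assoc)
qed

lemma dpow_list_Cons_mult:
  assumes der: "derivations n d" and "x < n" "x \<notin> set xs" and "lookup K x = 0" "lookup A x = 0"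
  shows "(d x ^^ m) (dpow_list d xs (K - A) u * dpow_list d xs A v)
    = (\<Sum>a\<le>m. of_nat (m choose a) * dpow_list d (x # xs) (K + single x m - (A + single x a)) u
        * dpow_list d (x # xs) (A + single x a) v)"
  unfolding derivation_funpow_mult[OF der \<open>x < n\<close>] using assms(3-)
  by (intro sum.cong refl) (simp add: diff_add_single dpow_list_add_single lookup_minus)

lemma dpow_list_mult:
  assumes der: "derivations n d" and "set xs \<subseteq> {..<n}" "distinct xs" "keys K \<subseteq> set xs"
  shows "dpow_list d xs K (u * v) = (\<Sum>A\<in>box K.
    of_nat (\<Prod>i\<in>set xs. lookup K i choose lookup A i) * dpow_list d xs (K - A) u * dpow_list d xs A v)"
  using assms(2-)
proof (induction xs arbitrary: K)
  case Nil
  then show ?case by simp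
next
  case (Cons x xs)
  define m where "m = lookup K x"
  define K' where "K' = K - single x m"
  have x: "x < n" "x \<notin> set xs"
    using Cons.prems by auto
  have K: "K = K' + single x m"
    by (rule poly_mapping_eqI) (simp add: K'_def m_def lookup_add lookup_minus lookup_single when_def)
  have K'x: "lookup K' x = 0"
    by (simp add: K'_def m_def lookup_minus)
  have K'_keys: "keys K' \<subseteq> set xs"
    using Cons.prems(3)
    by (auto simp: K'_def m_def subset_iff in_keys_iff lookup_minus lookup_single when_def split: if_splits)
  have IH: "dpow_list d xs K' (u * v) = (\<Sum>A'\<in>box K'. of_nat (\<Prod>i\<in>set xs. lookup K' i choose lookup A' i)
      * (dpow_list d xs (K' - A') u * dpow_list d xs A' v))"
    using Cons.IH[OF _ _ K'_keys] Cons.prems by (simp add: mult.assoc del: of_nat_prod)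
  define G where "G A = of_nat (\<Prod>i\<in>set (x # xs). lookup K i choose lookup A i)
    * dpow_list d (x # xs) (K - A) u * dpow_list d (x # xs) A v" for A
  have add: "additive (d x ^^ m)"
    by (rule additive_funpow[OF derivations_additive[OF der x(1)]])
  have "dpow_list d (x # xs) K (u * v) = (d x ^^ m) (dpow_list d xs K' (u * v))"
    unfolding K by (rule dpow_list_add_single[OF x(2) K'x])
  also have "\<dots> = (\<Sum>A'\<in>box K'. of_nat (\<Prod>i\<in>set xs. lookup K' i choose lookup A' i)
      * (d x ^^ m) (dpow_list d xs (K' - A') u * dpow_list d xs A' v))"
    by (simp only: IH additive.sum[OF add] additive_of_nat_mult[OF add])
  also have "\<dots> = (\<Sum>A'\<in>box K'. \<Sum>a\<le>m. G (A' + single x a))"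
  proof (rule sum.cong[OF refl])
    fix A' assume "A' \<in> box K'"
    then have A'x: "lookup A' x = 0"
      using K'x by (rule lookup_eq_zero_of_mem_box)
    have "(\<Prod>i\<in>set (x # xs). lookup K i choose lookup (A' + single x a) i)
        = (m choose a) * (\<Prod>i\<in>set xs. lookup K' i choose lookup A' i)" for a
      unfolding K set_simps by (rule prod_choose_add_single[OF finite_set x(2) K'x A'x])
    then show "of_nat (\<Prod>i\<in>set xs. lookup K' i choose lookup A' i)
        * (d x ^^ m) (dpow_list d xs (K' - A') u * dpow_list d xs A' v) = (\<Sum>a\<le>m. G (A' + single x a))"
      unfolding dpow_list_Cons_mult[OF der x K'x A'x] sum_distrib_left
      by (intro sum.cong refl) (simp add: G_def K del: of_nat_prod)
  qed
  also have "\<dots> = (\<Sum>A\<in>box K. G A)"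
    by (rule sum_box_add_single[OF K K'x, symmetric])
  finally show ?case
    unfolding G_def .
qed

lemma mdeg_eq_sum_superset: "finite S \<Longrightarrow> keys J \<subseteq> S \<Longrightarrow> mdeg J = (\<Sum>i\<in>S. lookup J i)"
  unfolding mdeg_def by (rule sum.mono_neutral_left) (auto simp: in_keys_iff)

lemma mbinom_eq_prod_superset:
  assumes "finite S" "keys J \<subseteq> S" and "I \<in> box J"
  shows "mbinom J I = (\<Prod>i\<in>S. lookup J i choose lookup I i)"
  unfolding mbinom_def using assms
  by (intro prod.mono_neutral_left) (auto simp: in_keys_iff lookup_eq_zero_of_mem_box)

lemma mbinom_self [simp]: "mbinom J J = 1"
  by (simp add: mbinom_def)

lemma mbinom_mult:
  assumes I: "I \<in> box J" and I': "I' \<in> box I"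
  shows "mbinom J I * mbinom I I' = mbinom J I' * mbinom (J - I') (I - I')"
proof -
  let ?S = "keys J"
  have I'J: "I' \<in> box J"
    using I I' by (auto simp: mem_box intro: order_trans)
  have "I - I' \<in> box (J - I')"
    using I by (auto simp: mem_box lookup_minus intro: diff_le_mono)
  then have "mbinom (J - I') (I - I') = (\<Prod>i\<in>?S. (lookup J i - lookup I' i) choose (lookup I i - lookup I' i))"
    by (subst mbinom_eq_prod_superset[where S = ?S]) (auto simp: in_keys_iff lookup_minus)
  moreover have "mbinom J I * mbinom I I' = (\<Prod>i\<in>?S. (lookup J i choose lookup I i) * (lookup I i choose lookup I' i))"
    using I I' keys_subset_of_mem_box[OF I]
    by (simp add: mbinom_eq_prod_superset[where S = ?S] prod.distrib)
  moreover have "\<dots> = (\<Prod>i\<in>?S. (lookup J i choose lookup I' i) * ((lookup J i - lookup I' i) choose (lookup I i - lookup I' i)))"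
    using I I' by (intro prod.cong refl choose_mult) (auto simp: mem_box)
  ultimately show ?thesis
    using I'J by (simp add: mbinom_eq_prod_superset[where S = ?S] prod.distrib)
qed

lemma dpow_mult:
  assumes der: "derivations n d" and K: "keys K \<subseteq> {..<n}"
  shows "dpow n d K (u * v) = (\<Sum>A\<in>box K. of_nat (mbinom K A) * dpow n d (K - A) u * dpow n d A v)"
proof -
  have "dpow n d K (u * v) = (\<Sum>A\<in>box K. of_nat (\<Prod>i\<in>{..<n}. lookup K i choose lookup A i)
      * dpow n d (K - A) u * dpow n d A v)"
    unfolding dpow_eq_dpow_list using dpow_list_mult[OF der, of "[0..<n]" K] K
    by (simp add: lessThan_atLeast0 del: of_nat_prod)
  also have "\<dots> = (\<Sum>A\<in>box K. of_nat (mbinom K A) * dpow n d (K - A) u * dpow n d A v)"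
    using K by (intro sum.cong refl) (simp add: mbinom_eq_prod_superset[of "{..<n}"] del: of_nat_prod)
  finally show ?thesis .
qed

lemma mdeg_le_of_mem_box:
  assumes "I \<in> box J"
  shows "mdeg I \<le> mdeg J"
proof -
  have "mdeg I = (\<Sum>i\<in>keys J. lookup I i)"
    using keys_subset_of_mem_box[OF assms] by (intro mdeg_eq_sum_superset) auto
  also have "\<dots> \<le> (\<Sum>i\<in>keys J. lookup J i)"
    using assms by (intro sum_mono) (simp add: mem_box)
  finally show ?thesis
    by (simp add: mdeg_def)
qed

lemma eq_of_mem_box_of_mdeg_eq:
  assumes I: "I \<in> box J" and eq: "mdeg I = mdeg J"
  shows "I = J"
proof (rule poly_mapping_eqI)
  fix i
  have sums: "(\<Sum>i\<in>keys J. lookup I i) = (\<Sum>i\<in>keys J. lookup J i)"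
    using eq mdeg_eq_sum_superset[OF finite_keys keys_subset_of_mem_box[OF I]] by (simp add: mdeg_def)
  show "lookup I i = lookup J i"
  proof (cases "i \<in> keys J")
    case True
    then show ?thesis
      using I by (intro sum_mono_inv[OF sums]) (simp_all add: mem_box)
  next
    case False
    then show ?thesis
      using I by (simp add: in_keys_iff lookup_eq_zero_of_mem_box)
  qed
qed

section \<open>Composition with a constant\<close>

definition comp_term :: "nat \<Rightarrow> (nat \<Rightarrow> 'a::field \<Rightarrow> 'a) \<Rightarrow> mindex \<Rightarrow> 'a \<Rightarrow> mindex \<Rightarrow> 'a \<Rightarrow> 'a mpoly" where
  "comp_term n d J a M b = (\<Sum>I\<in>box J. single (I + M) (a * of_nat (mbinom J I) * dpow n d (J - I) b))"

lemma comp_term_zero_left [simp]: "comp_term n d J 0 M b = 0"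
  by (simp add: comp_term_def)

lemma comp_term_zero_right: "derivations n d \<Longrightarrow> comp_term n d J a M 0 = 0"
  by (simp add: comp_term_def additive.zero[OF additive_dpow])

lemma comp_term_add_left: "comp_term n d J (a + a') M b = comp_term n d J a M b + comp_term n d J a' M b"
  by (simp add: comp_term_def sum.distrib[symmetric] single_add[symmetric] distrib_right)

lemma comp_term_mult_left: "comp_term n d J (c * a) M b = scal c (comp_term n d J a M b)"
  by (simp add: comp_term_def scal_sum scal_single mult.assoc)

lemma op_comp_eq_sum_keys_comp_term:
  "op_comp n d A B = (\<Sum>J\<in>keys A. \<Sum>M\<in>keys B. comp_term n d J (lookup A J) M (lookup B M))"
  by (simp add: op_comp_def comp_term_def box_def)

lemma op_comp_eq_sum_comp_term:
  assumes der: "derivations n d"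
    and S: "finite S" "keys A \<subseteq> S" and T: "finite T" "keys B \<subseteq> T"
  shows "op_comp n d A B = (\<Sum>J\<in>S. \<Sum>M\<in>T. comp_term n d J (lookup A J) M (lookup B M))"
proof -
  have "op_comp n d A B = (\<Sum>J\<in>keys A. \<Sum>M\<in>keys B. comp_term n d J (lookup A J) M (lookup B M))"
    by (rule op_comp_eq_sum_keys_comp_term)
  also have "\<dots> = (\<Sum>J\<in>keys A. \<Sum>M\<in>T. comp_term n d J (lookup A J) M (lookup B M))"
    using T by (intro sum.cong refl sum.mono_neutral_left) (simp_all add: in_keys_iff comp_term_zero_right[OF der])
  also have "\<dots> = (\<Sum>J\<in>S. \<Sum>M\<in>T. comp_term n d J (lookup A J) M (lookup B M))"
    using S by (intro sum.mono_neutral_left) (simp_all add: in_keys_iff)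
  finally show ?thesis .
qed

lemma op_comp_add_left:
  assumes der: "derivations n d"
  shows "op_comp n d (A + A') B = op_comp n d A B + op_comp n d A' B"
proof -
  let ?S = "keys A \<union> keys A'"
  have "op_comp n d (A + A') B = (\<Sum>J\<in>?S. \<Sum>M\<in>keys B. comp_term n d J (lookup (A + A') J) M (lookup B M))"
    using keys_add[of A A'] by (intro op_comp_eq_sum_comp_term[OF der]) auto
  also have "\<dots> = op_comp n d A B + op_comp n d A' B"
    by (simp add: lookup_add comp_term_add_left sum.distrib op_comp_eq_sum_comp_term[OF der, of ?S _ "keys B"])
  finally show ?thesis .
qed

lemma op_comp_zero_left [simp]: "op_comp n d 0 B = 0"
  by (simp add: op_comp_def)

lemma op_comp_sum_left:
  assumes der: "derivations n d"
  shows "op_comp n d (\<Sum>x\<in>X. F x) B = (\<Sum>x\<in>X. op_comp n d (F x) B)"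
  by (induction X rule: infinite_finite_induct) (simp_all add: op_comp_add_left[OF der])

lemma op_comp_single_left:
  assumes der: "derivations n d"
  shows "op_comp n d (single J a) B = (\<Sum>M\<in>keys B. comp_term n d J a M (lookup B M))"
  by (subst op_comp_eq_sum_comp_term[OF der, of "{J}" _ "keys B"]) auto

lemma op_comp_scal_left:
  assumes der: "derivations n d"
  shows "op_comp n d (scal c A) B = scal c (op_comp n d A B)"
proof -
  have "op_comp n d (scal c A) B = (\<Sum>J\<in>keys A. \<Sum>M\<in>keys B. comp_term n d J (lookup (scal c A) J) M (lookup B M))"
    by (rule op_comp_eq_sum_comp_term[OF der]) (simp_all add: keys_scal_subset)
  also have "\<dots> = scal c (op_comp n d A B)"
    by (simp add: comp_term_mult_left scal_sum op_comp_eq_sum_keys_comp_term)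
  finally show ?thesis .
qed

lemma op_comp_const_right:
  assumes der: "derivations n d"
  shows "op_comp n d F (single 0 c) =
    (\<Sum>J\<in>keys F. \<Sum>I\<in>box J. single I (lookup F J * of_nat (mbinom J I) * dpow n d (J - I) c))"
  by (subst op_comp_eq_sum_comp_term[OF der, of "keys F" _ "{0}"]) (auto simp: comp_term_def)

lemma sum_box_box_reindex:
  "(\<Sum>I\<in>box J. \<Sum>I'\<in>box I. F I I') = (\<Sum>I'\<in>box J. \<Sum>A\<in>box (J - I'). F (I' + A) I')"
proof -
  have "(\<Sum>I\<in>box J. \<Sum>I'\<in>box I. F I I') = (\<Sum>p\<in>Sigma (box J) box. F (fst p) (snd p))"
    by (simp add: sum.Sigma finite_box split_beta)
  also have "\<dots> = (\<Sum>q\<in>Sigma (box J) (\<lambda>I'. box (J - I')). F (fst q + snd q) (fst q))"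
  proof (rule sum.reindex_bij_witness[where i = "\<lambda>q. (fst q + snd q, fst q)" and j = "\<lambda>p. (snd p, fst p - snd p)"])
    fix p assume "p \<in> Sigma (box J) box"
    then have le: "\<forall>i. lookup (snd p) i \<le> lookup (fst p) i" "\<forall>i. lookup (fst p) i \<le> lookup J i"
      by (auto simp: mem_box)
    then have "snd p + (fst p - snd p) = fst p"
      by (auto intro!: poly_mapping_eqI simp: lookup_add lookup_minus)
    then show "(fst (snd p, fst p - snd p) + snd (snd p, fst p - snd p), fst (snd p, fst p - snd p)) = p"
      and "F (fst (snd p, fst p - snd p) + snd (snd p, fst p - snd p)) (fst (snd p, fst p - snd p))
        = F (fst p) (snd p)"
      by simp_all
    show "(snd p, fst p - snd p) \<in> Sigma (box J) (\<lambda>I'. box (J - I'))"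
      using le by (auto simp: mem_box lookup_minus intro: order_trans diff_le_mono)
  next
    fix q assume "q \<in> Sigma (box J) (\<lambda>I'. box (J - I'))"
    then have "\<forall>i. lookup (fst q) i \<le> lookup J i" "\<forall>i. lookup (snd q) i \<le> lookup J i - lookup (fst q) i"
      by (auto simp: mem_box lookup_minus)
    then show "(snd (fst q + snd q, fst q), fst (fst q + snd q, fst q) - snd (fst q + snd q, fst q)) = q"
      and "(fst q + snd q, fst q) \<in> Sigma (box J) box"
      by (auto intro!: poly_mapping_eqI simp: prod_eq_iff mem_box lookup_add lookup_minus)
        (metis add.commute le_diff_conv2)
  qed
  also have "\<dots> = (\<Sum>I'\<in>box J. \<Sum>A\<in>box (J - I'). F (I' + A) I')"
    by (simp add: sum.Sigma finite_box split_beta)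
  finally show ?thesis .
qed

lemma single_sum: "single k (sum f A) = (\<Sum>x\<in>A. single k (f x))"
  by (induction A rule: infinite_finite_induct) (simp_all add: single_add)

lemma keys_diff_subset: "keys (J - I) \<subseteq> keys (J :: mindex)"
  by (auto simp: in_keys_iff lookup_minus)

lemma mbinom_mult_add:
  assumes I': "I' \<in> box J" and A: "A \<in> box (J - I')"
  shows "mbinom J (I' + A) * mbinom (I' + A) I' = mbinom J I' * mbinom (J - I') A"
proof -
  have "I' + A \<in> box J" and "I' \<in> box (I' + A)"
    using I' A by (auto simp: mem_box lookup_add lookup_minus) (metis add.commute le_diff_conv2)
  moreover have "I' + A - I' = A"
    by (auto intro!: poly_mapping_eqI simp: lookup_add lookup_minus)
  ultimately show ?thesis
    using mbinom_mult by metis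
qed

lemma sum_comp_term_reindex:
  "(\<Sum>I\<in>box J. comp_term n d I (f * of_nat (mbinom J I) * dpow n d (J - I) c) M z)
    = (\<Sum>I'\<in>box J. \<Sum>A\<in>box (J - I'). single (I' + M)
        (f * of_nat (mbinom J I') * (of_nat (mbinom (J - I') A) * dpow n d (J - I' - A) c * dpow n d A z)))"
proof -
  have "(\<Sum>I\<in>box J. comp_term n d I (f * of_nat (mbinom J I) * dpow n d (J - I) c) M z)
      = (\<Sum>I'\<in>box J. \<Sum>A\<in>box (J - I'). single (I' + M)
        (f * of_nat (mbinom J (I' + A)) * dpow n d (J - (I' + A)) c
          * of_nat (mbinom (I' + A) I') * dpow n d (I' + A - I') z))"
    unfolding comp_term_def by (rule sum_box_box_reindex)
  also have "\<dots> = (\<Sum>I'\<in>box J. \<Sum>A\<in>box (J - I'). single (I' + M)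
      (f * of_nat (mbinom J I') * (of_nat (mbinom (J - I') A) * dpow n d (J - I' - A) c * dpow n d A z)))"
  proof (intro sum.cong refl)
    fix I' A assume "I' \<in> box J" and "A \<in> box (J - I')"
    then have binom: "of_nat (mbinom J (I' + A)) * of_nat (mbinom (I' + A) I')
        = (of_nat (mbinom J I') * of_nat (mbinom (J - I') A) :: 'a)"
      by (simp flip: of_nat_mult add: mbinom_mult_add)
    have sub: "I' + A - I' = A" "J - (I' + A) = J - I' - A"
      by (auto intro!: poly_mapping_eqI simp: lookup_add lookup_minus)
    have "f * of_nat (mbinom J (I' + A)) * dpow n d (J - (I' + A)) c
        * of_nat (mbinom (I' + A) I') * dpow n d (I' + A - I') z
      = f * (of_nat (mbinom J (I' + A)) * of_nat (mbinom (I' + A) I')) * dpow n d (J - I' - A) c * dpow n d A z"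
      unfolding sub by (simp only: ac_simps)
    also have "\<dots> = f * of_nat (mbinom J I') * (of_nat (mbinom (J - I') A) * dpow n d (J - I' - A) c * dpow n d A z)"
      unfolding binom by (simp only: ac_simps)
    finally show "single (I' + M) (f * of_nat (mbinom J (I' + A)) * dpow n d (J - (I' + A)) c
        * of_nat (mbinom (I' + A) I') * dpow n d (I' + A - I') z)
      = single (I' + M) (f * of_nat (mbinom J I')
        * (of_nat (mbinom (J - I') A) * dpow n d (J - I' - A) c * dpow n d A z))"
      by (rule arg_cong)
  qed
  finally show ?thesis .
qed

lemma comp_term_const_assoc:
  assumes der: "derivations n d" and J: "keys J \<subseteq> {..<n}"
  shows "(\<Sum>I\<in>box J. comp_term n d I (f * of_nat (mbinom J I) * dpow n d (J - I) c) M z)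
    = comp_term n d J f M (c * z)"
proof -
  have "keys (J - I') \<subseteq> {..<n}" for I'
    using J keys_diff_subset by blast
  then show ?thesis
    unfolding sum_comp_term_reindex
    by (simp add: comp_term_def dpow_mult[OF der] single_sum sum_distrib_left)
qed

lemma op_comp_const_assoc:
  assumes der: "derivations n d" and F: "in_vars n F"
  shows "op_comp n d (op_comp n d F (single 0 c)) Z = op_comp n d F (scal c Z)"
proof -
  have "op_comp n d (op_comp n d F (single 0 c)) Z
     = (\<Sum>J\<in>keys F. \<Sum>I\<in>box J. \<Sum>M\<in>keys Z.
          comp_term n d I (lookup F J * of_nat (mbinom J I) * dpow n d (J - I) c) M (lookup Z M))"
    by (simp add: op_comp_const_right[OF der] op_comp_sum_left[OF der] op_comp_single_left[OF der])
  also have "\<dots> = (\<Sum>J\<in>keys F. \<Sum>M\<in>keys Z. comp_term n d J (lookup F J) M (c * lookup Z M))"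
  proof (rule sum.cong[OF refl])
    fix J assume "J \<in> keys F"
    then have "keys J \<subseteq> {..<n}"
      using F by (auto simp: in_vars_def)
    then show "(\<Sum>I\<in>box J. \<Sum>M\<in>keys Z. comp_term n d I (lookup F J * of_nat (mbinom J I) * dpow n d (J - I) c) M (lookup Z M))
       = (\<Sum>M\<in>keys Z. comp_term n d J (lookup F J) M (c * lookup Z M))"
      by (subst sum.swap) (simp add: comp_term_const_assoc[OF der])
  qed
  also have "\<dots> = (\<Sum>J\<in>keys F. \<Sum>M\<in>keys Z. comp_term n d J (lookup F J) M (lookup (scal c Z) M))"
    by simp
  also have "\<dots> = op_comp n d F (scal c Z)"
    by (rule op_comp_eq_sum_comp_term[OF der, symmetric]) (simp_all add: keys_scal_subset)
  finally show ?thesis .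
qed

lemma lookup_Sym: "lookup (Sym L) Q = (if int (mdeg Q) = ord L then lookup L Q else 0)"
proof -
  have "lookup (Sym L) Q = (\<Sum>J\<in>{J \<in> keys L. int (mdeg J) = ord L}. if J = Q then lookup L J else 0)"
    by (simp add: Sym_def lookup_sum lookup_single when_def eq_commute)
  also have "\<dots> = (if int (mdeg Q) = ord L then lookup L Q else 0)"
    by (auto simp: sum.delta in_keys_iff)
  finally show ?thesis .
qed

lemma Sym_zero [simp]: "Sym 0 = 0"
  by (simp add: Sym_def)

lemma ord_eq_of_keys_eq: "keys A = keys B \<Longrightarrow> ord A = ord B"
  unfolding ord_def by (metis keys_eq_empty)

lemma Sym_scal: "(c::'a::field) \<noteq> 0 \<Longrightarrow> Sym (scal c L) = scal c (Sym L)"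
  by (rule poly_mapping_eqI) (simp add: lookup_Sym ord_eq_of_keys_eq[OF keys_scal])

lemma ord_attained:
  assumes "L \<noteq> 0"
  obtains J where "J \<in> keys L" "int (mdeg J) = ord L" "\<forall>Q\<in>keys L. mdeg Q \<le> mdeg J"
proof -
  have "Max (mdeg ` keys L) \<in> mdeg ` keys L"
    using assms by (intro Max_in) auto
  then obtain J where "J \<in> keys L" and "mdeg J = Max (mdeg ` keys L)"
    by (metis imageE)
  with assms show ?thesis
    by (intro that) (auto simp: ord_def intro!: Max_ge)
qed

lemma ord_eqI:
  assumes "J \<in> keys L" and "\<forall>Q\<in>keys L. mdeg Q \<le> mdeg J"
  shows "ord L = int (mdeg J)"
proof -
  have "Max (mdeg ` keys L) = mdeg J"
    using assms by (intro Max_eqI) auto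
  with assms(1) show ?thesis
    by (auto simp: ord_def)
qed

lemma lookup_op_comp_const:
  assumes der: "derivations n d"
  shows "lookup (op_comp n d F (single 0 c)) Q =
     (\<Sum>J\<in>keys F. if Q \<in> box J then lookup F J * of_nat (mbinom J Q) * dpow n d (J - Q) c else 0)"
  by (simp add: op_comp_const_right[OF der] lookup_sum lookup_single when_def sum.delta finite_box)

lemma lookup_op_comp_const_top:
  assumes der: "derivations n d" and top: "\<forall>J\<in>keys F. mdeg J \<le> mdeg Q"
  shows "lookup (op_comp n d F (single 0 c)) Q = c * lookup F Q"
proof -
  have "lookup (op_comp n d F (single 0 c)) Q = (\<Sum>J\<in>keys F. if J = Q then lookup F J * c else 0)"
    unfolding lookup_op_comp_const[OF der]
  proof (intro sum.cong refl)
    fix J assume "J \<in> keys F"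
    then have "Q \<in> box J \<Longrightarrow> Q = J"
      using top by (metis eq_of_mem_box_of_mdeg_eq mdeg_le_of_mem_box le_antisym)
    then show "(if Q \<in> box J then lookup F J * of_nat (mbinom J Q) * dpow n d (J - Q) c else 0)
        = (if J = Q then lookup F J * c else 0)"
      by auto
  qed
  also have "\<dots> = c * lookup F Q"
    by (simp add: sum.delta in_keys_iff)
  finally show ?thesis .
qed

text \<open>The Leibniz terms of \<open>D\<^sup>J \<circ> c\<close> other than \<open>c D\<^sup>J\<close> have lower order.\<close>

lemma Sym_op_comp_const:
  assumes der: "derivations n d" and c: "c \<noteq> 0"
  shows "Sym (op_comp n d F (single 0 c)) = scal c (Sym F)"
proof (cases "F = 0")
  case False
  then obtain J where J: "J \<in> keys F" "int (mdeg J) = ord F" and top: "\<forall>Q\<in>keys F. mdeg Q \<le> mdeg J"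
    by (rule ord_attained)
  define P where "P = op_comp n d F (single 0 c)"
  have high: "lookup P Q = c * lookup F Q" if "mdeg J \<le> mdeg Q" for Q
    unfolding P_def using top that by (intro lookup_op_comp_const_top[OF der]) auto
  have "ord P = int (mdeg J)"
  proof (rule ord_eqI)
    show "J \<in> keys P"
      using J(1) c high[of J] by (simp add: in_keys_iff)
    show "\<forall>Q\<in>keys P. mdeg Q \<le> mdeg J"
    proof (intro ballI leI notI)
      fix Q assume "Q \<in> keys P" and "mdeg J < mdeg Q"
      moreover have "Q \<notin> keys F"
        using top \<open>mdeg J < mdeg Q\<close> by auto
      ultimately show False
        using high[of Q] by (simp add: in_keys_iff)
    qed
  qed
  then show ?thesis
    unfolding P_def[symmetric] by (intro poly_mapping_eqI) (auto simp: lookup_Sym J(2)[symmetric] high)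
qed simp

lemma in_vars_op_comp_const:
  assumes der: "derivations n d" and F: "in_vars n F"
  shows "in_vars n (op_comp n d F (single 0 c))"
proof -
  have "keys (op_comp n d F (single 0 c)) \<subseteq> (\<Union>J\<in>keys F. box J)"
  proof
    fix Q assume "Q \<in> keys (op_comp n d F (single 0 c))"
    moreover have "lookup (op_comp n d F (single 0 c)) Q = 0" if "\<forall>J\<in>keys F. Q \<notin> box J"
      using that by (simp add: lookup_op_comp_const[OF der])
    ultimately show "Q \<in> (\<Union>J\<in>keys F. box J)"
      by (auto simp: in_keys_iff)
  qed
  then show ?thesis
    using F keys_subset_of_mem_box unfolding in_vars_def by blast
qed

section \<open>Rescaling factorizations\<close>

lemma op_comp_list_Cons: "op_comp_list n d (F # Fs) = op_comp n d F (op_comp_list n d Fs)"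
  by (simp add: op_comp_list_def)

text \<open>\<open>rescale_factors n d c bs Fs\<close> replaces the \<open>i\<close>-th factor \<open>F\<^sub>i\<close> by
  \<open>c\<^sub>i\<^sub>-\<^sub>1\<inverse> (F\<^sub>i \<circ> c\<^sub>i)\<close>, where \<open>c\<^sub>i = c b\<^sub>1\<cdots>b\<^sub>i\<close>.\<close>

fun rescale_factors :: "nat \<Rightarrow> (nat \<Rightarrow> 'a::field \<Rightarrow> 'a) \<Rightarrow> 'a \<Rightarrow> 'a list \<Rightarrow> 'a mpoly list \<Rightarrow> 'a mpoly list" where
  "rescale_factors n d c (b # bs) (F # Fs) =
    scal (inverse c) (op_comp n d F (single 0 (c * b))) # rescale_factors n d (c * b) bs Fs"
| "rescale_factors n d c _ _ = []"

lemma length_rescale_factors: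
  "length bs = length Fs \<Longrightarrow> length (rescale_factors n d c bs Fs) = length Fs"
  by (induction bs Fs arbitrary: c rule: list_induct2) auto

lemma op_comp_list_rescale_factors:
  assumes der: "derivations n d"
  shows "length bs = length Fs \<Longrightarrow> \<forall>F\<in>set Fs. in_vars n F \<Longrightarrow> 0 \<notin> set bs \<Longrightarrow> c * prod_list bs = 1 \<Longrightarrow>
    op_comp_list n d (rescale_factors n d c bs Fs) = scal (inverse c) (op_comp_list n d Fs)"
proof (induction bs Fs arbitrary: c rule: list_induct2)
  case Nil
  then show ?case
    by (simp add: op_comp_list_def)
next
  case (Cons b bs F Fs)
  let ?Y = "op_comp_list n d Fs"
  have cb: "c * b \<noteq> 0"
    using Cons.prems by auto
  have "op_comp_list n d (rescale_factors n d c (b # bs) (F # Fs))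
      = op_comp n d (scal (inverse c) (op_comp n d F (single 0 (c * b)))) (scal (inverse (c * b)) ?Y)"
    using Cons by (simp add: op_comp_list_Cons mult.assoc)
  also have "\<dots> = scal (inverse c) (op_comp n d F (scal (c * b) (scal (inverse (c * b)) ?Y)))"
    using Cons.prems by (simp add: op_comp_scal_left[OF der] op_comp_const_assoc[OF der])
  also have "\<dots> = scal (inverse c) (op_comp_list n d (F # Fs))"
    using cb by (simp add: op_comp_list_Cons field_simps)
  finally show ?case .
qed

lemma rescale_factors_in_vars_Sym:
  assumes der: "derivations n d"
  shows "length bs = length Fs \<Longrightarrow> \<forall>F\<in>set Fs. in_vars n F \<Longrightarrow> c \<noteq> 0 \<Longrightarrow> 0 \<notin> set bs \<Longrightarrow>
    i < length Fs \<Longrightarrow> in_vars n (rescale_factors n d c bs Fs ! i)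
      \<and> Sym (rescale_factors n d c bs Fs ! i) = scal (bs ! i) (Sym (Fs ! i))"
proof (induction bs Fs arbitrary: c i rule: list_induct2)
  case (Cons b bs F Fs)
  have cb: "c * b \<noteq> 0"
    using Cons.prems by auto
  show ?case
  proof (cases i)
    case 0
    have cancel: "inverse c * (c * b) = b"
      using Cons.prems by (simp add: field_simps)
    with 0 Cons.prems cb show ?thesis
      by (simp add: in_vars_scal in_vars_op_comp_const[OF der] Sym_scal Sym_op_comp_const[OF der] cancel)
  next
    case (Suc j)
    with Cons cb show ?thesis
      by simp
  qed
qed simp

lemma has_factorization_map2_scal:
  assumes der: "derivations n d" and len: "length b = length S" and b: "prod_list b = 1"
    and M: "has_factorization n d M S"
  shows "has_factorization n d M (map2 scal b S)"
proof -
  obtain Fs where len_Fs: "length Fs = length S"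
    and Fs: "\<forall>i<length S. in_vars n (Fs ! i) \<and> Sym (Fs ! i) = S ! i" and M_eq: "M = op_comp_list n d Fs"
    using M unfolding has_factorization_def by blast
  have b0: "0 \<notin> set b"
    using b by (metis prod_list_zero_iff zero_neq_one)
  have in_vars: "\<forall>F\<in>set Fs. in_vars n F"
    using Fs len_Fs by (metis in_set_conv_nth)
  have len': "length b = length Fs"
    using len len_Fs by simp
  define Gs where "Gs = rescale_factors n d 1 b Fs"
  have "length Gs = length (map2 scal b S)"
    using length_rescale_factors[OF len'] len_Fs len by (simp add: Gs_def)
  moreover have "\<forall>i<length (map2 scal b S). in_vars n (Gs ! i) \<and> Sym (Gs ! i) = map2 scal b S ! i"
    using rescale_factors_in_vars_Sym[OF der len' in_vars _ b0] Fs len_Fs len by (simp add: Gs_def)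
  moreover have "M = op_comp_list n d Gs"
    using op_comp_list_rescale_factors[OF der len' in_vars b0] b M_eq by (simp add: Gs_def)
  ultimately show ?thesis
    unfolding has_factorization_def by blast
qed

lemma prod_list_map_inverse: "prod_list (map inverse b) = inverse (prod_list (b :: 'a::field list))"
  by (induction b) (simp_all add: inverse_mult_distrib)

lemma has_factorization_map2_scal_iff:
  assumes der: "derivations n d" and len: "length b = length S" and b: "prod_list b = 1"
  shows "has_factorization n d M (map2 scal b S) \<longleftrightarrow> has_factorization n d M S"
proof
  assume "has_factorization n d M S"
  then show "has_factorization n d M (map2 scal b S)"
    by (rule has_factorization_map2_scal[OF der len b])
next
  assume M: "has_factorization n d M (map2 scal b S)"
  have "b ! i \<noteq> 0" if "i < length b" for i
    using b that by (metis nth_mem prod_list_zero_iff zero_neq_one)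
  then have "map2 scal (map inverse b) (map2 scal b S) = S"
    using len by (intro nth_equalityI) simp_all
  moreover have "prod_list (map inverse b) = 1"
    using b by (simp add: prod_list_map_inverse)
  ultimately show "has_factorization n d M S"
    using has_factorization_map2_scal[OF der _ _ M, of "map inverse b"] len by simp
qed

theorem mainTheorem7:
  fixes n :: nat and d :: "nat \<Rightarrow> 'a::field \<Rightarrow> 'a"
    and L :: "'a mpoly" and S :: "'a mpoly list" and b :: "'a list"
  assumes "derivations n d"
    and "in_vars n L"
    and "\<forall>i<length S. in_vars n (S ! i) \<and> homogeneous (S ! i)"
    and "length b = length S"
    and "prod_list b = 1"
    and "Sym L = prod_list S"
  shows "obstacle_ideal n S = obstacle_ideal n (map2 scal b S)
    \<and> obstacle_classes n d L S = obstacle_classes n d L (map2 scal b S)"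
proof
  have "0 \<notin> set b"
    using assms(5) by (metis prod_list_zero_iff zero_neq_one)
  then show ideal: "obstacle_ideal n S = obstacle_ideal n (map2 scal b S)"
    using assms(4) by (simp add: obstacle_ideal_map2_scal)
  show "obstacle_classes n d L S = obstacle_classes n d L (map2 scal b S)"
    unfolding obstacle_classes_def common_obstacle_def ideal
      has_factorization_map2_scal_iff[OF assms(1,4,5)] ..
qed

end
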